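(* For every pair of positive integers $l$ and $r$, there exists a graph $G$ of order $lr$ that admits a regular distance $l$-labeling of degree $r$.
   Context: All graphs are finite and simple; $d(u,v)$ denotes the usual graph distance. For integers $m\le n$, $[m,n]=\{m,m+1,\ldots,n\}$. For a graph $G$ and a positive integer $l$, a distance $l$-labeling of $G$ is a function $f:V(G)\to[0,l]$ such that (i) $f(V(G))=[0,l]$ or $f(V(G))=[1,l]$, and (ii) whenever two distinct vertices $u,v$ satisfy $f(u)=f(v)=k$, we have $d(u,v)=k$. A distance $l$-labeling is regular of degree $r$ if for every $k\in[1,l]$ there are exactly $r$ vertices labeled $k$. *)

theory Defs
  imports Main "HOL-Library.Extended_Nat"
begin

definition simple_graph :: "'a set \<Rightarrow> ('a \<Rightarrow> 'a \<Rightarrow> bool) \<Rightarrow> bool" where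
  "simple_graph V E \<longleftrightarrow> finite V
     \<and> (\<forall>u v. E u v \<longrightarrow> u \<in> V \<and> v \<in> V)
     \<and> (\<forall>u v. E u v \<longrightarrow> E v u)
     \<and> (\<forall>u. \<not> E u u)"

inductive walk :: "('a \<Rightarrow> 'a \<Rightarrow> bool) \<Rightarrow> 'a \<Rightarrow> 'a \<Rightarrow> nat \<Rightarrow> bool" for E where
  walk_nil: "walk E u u 0"
| walk_cons: "E u w \<Longrightarrow> walk E w v n \<Longrightarrow> walk E u v (Suc n)"

definition gdist :: "('a \<Rightarrow> 'a \<Rightarrow> bool) \<Rightarrow> 'a \<Rightarrow> 'a \<Rightarrow> enat" where
  "gdist E u v = (if \<exists>n. walk E u v n then enat (LEAST n. walk E u v n) else \<infinity>)"

definition distance_labeling ::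
  "'a set \<Rightarrow> ('a \<Rightarrow> 'a \<Rightarrow> bool) \<Rightarrow> nat \<Rightarrow> ('a \<Rightarrow> nat) \<Rightarrow> bool" where
  "distance_labeling V E l f \<longleftrightarrow>
     (f ` V = {0..l} \<or> f ` V = {1..l})
     \<and> (\<forall>u\<in>V. \<forall>v\<in>V. u \<noteq> v \<longrightarrow> f u = f v \<longrightarrow> gdist E u v = enat (f u))"

definition regular_distance_labeling ::
  "'a set \<Rightarrow> ('a \<Rightarrow> 'a \<Rightarrow> bool) \<Rightarrow> nat \<Rightarrow> nat \<Rightarrow> ('a \<Rightarrow> nat) \<Rightarrow> bool" where
  "regular_distance_labeling V E l r f \<longleftrightarrow>
     distance_labeling V E l f \<and> (\<forall>k\<in>{1..l}. card {v\<in>V. f v = k} = r)"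

end

theory Submission
  imports Defs
begin

text \<open>Write the vertex \<open>q * r + i\<close> (with \<open>i < r\<close>) as the point of level \<open>q\<close> in column \<open>i\<close>, and
  label it \<open>q + 1\<close>. The levels are joined into a comb: level \<open>0\<close> is a clique, each column is
  a path through the levels of one parity (steps of \<open>2\<close>), and the vertex \<open>0\<close> is joined to all
  of level \<open>1\<close>. Two points of level \<open>2m\<close> in different columns are joined by descending \<open>m\<close>
  steps, crossing the clique and ascending again; on level \<open>2m + 1\<close> one crosses through the
  hub \<open>0\<close> instead, which costs one more step. That no walk is shorter is shown by potentials
  which grow by at most one along every edge.\<close>

lemma walk_append: "walk E u w a \<Longrightarrow> walk E w v b \<Longrightarrow> walk E u v (a + b)"
  by (induction rule: walk.induct) (auto intro: walk.intros)

lemma walk_rev: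
  assumes "walk E u v n" and "\<And>a b. E a b \<Longrightarrow> E b a"
  shows "walk E v u n"
  using assms(1)
proof (induction rule: walk.induct)
  case (walk_cons u w v n)
  then show ?case
    using walk_append[of E v w n u 1] assms(2) by (auto intro: walk.intros)
qed (rule walk_nil)

lemma walk_potential_bound:
  fixes \<phi> :: "'a \<Rightarrow> int"
  assumes "walk E u v n" and "\<And>a b. E a b \<Longrightarrow> \<phi> b \<le> \<phi> a + 1"
  shows "\<phi> v \<le> \<phi> u + int n"
  using assms(1)
proof (induction rule: walk.induct)
  case (walk_cons u w v n)
  then show ?case using assms(2)[of u w] by simp
qed simp

lemma gdist_eqI:
  assumes "walk E u v k" and "\<And>n. walk E u v n \<Longrightarrow> k \<le> n"
  shows "gdist E u v = enat k"
proof -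
  have "(LEAST n. walk E u v n) = k"
    by (rule Least_equality) (use assms in auto)
  then show ?thesis using assms unfolding gdist_def by auto
qed

definition comb :: "nat \<Rightarrow> nat \<Rightarrow> nat \<Rightarrow> nat \<Rightarrow> bool" where
  "comb l r u v \<longleftrightarrow> u < l * r \<and> v < l * r \<and> u \<noteq> v \<and>
     ((u div r = 0 \<and> v div r = 0) \<or>
      (u mod r = v mod r \<and> (v div r = u div r + 2 \<or> u div r = v div r + 2)) \<or>
      (u = 0 \<and> v div r = 1) \<or> (v = 0 \<and> u div r = 1))"

lemma comb_sym: "comb l r u v \<Longrightarrow> comb l r v u"
  unfolding comb_def by auto

lemma simple_graph_comb: "simple_graph {0..<l * r} (comb l r)"
  unfolding simple_graph_def comb_def by auto

lemma comb_cases: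
  assumes "comb l r a b"
  shows "(a div r = 0 \<and> b div r = 0 \<and> a mod r \<noteq> b mod r) \<or>
     (a mod r = b mod r \<and> (b div r = a div r + 2 \<or> a div r = b div r + 2)) \<or>
     (a div r = 0 \<and> a mod r = 0 \<and> b div r = 1) \<or> (b div r = 0 \<and> b mod r = 0 \<and> a div r = 1)"
proof -
  have "a = a div r * r + a mod r" "b = b div r * r + b mod r" by simp_all
  then show ?thesis using assms unfolding comb_def by (metis div_0 mod_0)
qed

lemma comb_columnI:
  "a < l * r \<Longrightarrow> b < l * r \<Longrightarrow> a mod r = b mod r \<Longrightarrow> b div r = a div r + 2 \<Longrightarrow> comb l r a b"
  unfolding comb_def by auto

lemma level_div: "i < r \<Longrightarrow> (q * r + i) div r = (q :: nat)"
  by simp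

lemma column_mod: "i < r \<Longrightarrow> (q * r + i) mod r = (i :: nat)"
  by simp

lemma comb_column_walk:
  assumes "i < r" and "q + 2 * t < l"
  shows "walk (comb l r) (q * r + i) ((q + 2 * t) * r + i) t"
  using assms(2)
proof (induction t arbitrary: q)
  case 0
  then show ?case by (simp add: walk_nil)
next
  case (Suc t)
  have "(q + 2) * r + i < (q + 3) * r"
    using assms(1) by (simp add: algebra_simps)
  also have "\<dots> \<le> l * r"
    using Suc.prems by (intro mult_right_mono) auto
  finally have "(q + 2) * r + i < l * r" .
  moreover have "q * r + i < l * r"
    using \<open>(q + 2) * r + i < l * r\<close> by (rule le_less_trans[rotated]) simp
  ultimately have "comb l r (q * r + i) ((q + 2) * r + i)"
    by (intro comb_columnI) (simp_all only: level_div[OF assms(1)] column_mod[OF assms(1)])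
  moreover have "walk (comb l r) ((q + 2) * r + i) ((q + 2 + 2 * t) * r + i) t"
    using Suc.prems by (intro Suc.IH) simp
  moreover have "q + 2 + 2 * t = q + 2 * Suc t"
    by simp
  ultimately show ?case
    by (metis walk_cons)
qed

text \<open>\<open>bottom_potential r j\<close> is minus the depth on the even part of column \<open>j\<close> and more than
  the depth everywhere else, so a walk leaving column \<open>j\<close> pays for descending to level \<open>0\<close>;
  \<open>hub_potential r j\<close> does the same for the odd levels, where the exit is the hub \<open>0\<close>.\<close>
definition bottom_potential :: "nat \<Rightarrow> nat \<Rightarrow> nat \<Rightarrow> int" where
  "bottom_potential r j x =
     (let q = x div r in
      if even q then (if x mod r = j then - int (q div 2) else int (q div 2) + 1)
      else int ((q + 1) div 2) + (if j = 0 then 0 else 1))"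

definition hub_potential :: "nat \<Rightarrow> nat \<Rightarrow> nat \<Rightarrow> int" where
  "hub_potential r j x =
     (let q = x div r in
      if odd q then (if x mod r = j then - int ((q + 1) div 2) else int ((q + 1) div 2)) else 0)"

lemma bottom_potential_comb: "comb l r a b \<Longrightarrow> bottom_potential r j b \<le> bottom_potential r j a + 1"
  unfolding bottom_potential_def Let_def by (drule comb_cases) auto

lemma hub_potential_comb: "comb l r a b \<Longrightarrow> hub_potential r j b \<le> hub_potential r j a + 1"
  unfolding hub_potential_def Let_def by (drule comb_cases) auto

lemma gdist_comb_even_level:
  assumes "i < r" "j < r" "i \<noteq> j" "q < l" "even q"
  shows "gdist (comb l r) (q * r + i) (q * r + j) = enat (q + 1)"
proof (rule gdist_eqI)
  obtain m where q: "q = 2 * m" using assms(5) ..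
  have down: "walk (comb l r) (q * r + i) i m"
    using walk_rev[OF comb_column_walk[of i r 0 m l] comb_sym] assms q by simp
  have up: "walk (comb l r) j (q * r + j) m"
    using comb_column_walk[of j r 0 m l] assms q by simp
  have "r \<le> l * r"
    using assms(4) by simp
  then have "i < l * r" and "j < l * r"
    using assms(1,2) by linarith+
  then have "comb l r i j"
    unfolding comb_def using assms by auto
  then show "walk (comb l r) (q * r + i) (q * r + j) (q + 1)"
    using walk_append[OF down walk_cons[OF _ up]] q by (simp add: mult_2)
next
  fix n assume "walk (comb l r) (q * r + i) (q * r + j) n"
  then have "bottom_potential r i (q * r + j) \<le> bottom_potential r i (q * r + i) + int n"
    by (rule walk_potential_bound) (rule bottom_potential_comb)
  then show "q + 1 \<le> n"
    using assms by (auto simp: bottom_potential_def Let_def elim!: evenE)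
qed

lemma gdist_comb_odd_level:
  assumes "i < r" "j < r" "i \<noteq> j" "q < l" "odd q"
  shows "gdist (comb l r) (q * r + i) (q * r + j) = enat (q + 1)"
proof (rule gdist_eqI)
  obtain m where q: "q = 2 * m + 1" using assms(5) ..
  have down: "walk (comb l r) (q * r + i) (r + i) m"
    using walk_rev[OF comb_column_walk[of i r 1 m l] comb_sym] assms q by (simp add: mult_2)
  have up: "walk (comb l r) (r + j) (q * r + j) m"
    using comb_column_walk[of j r 1 m l] assms q by (simp add: mult_2)
  have "2 * r \<le> l * r"
    using assms q by (intro mult_right_mono) auto
  then have "r + i < l * r" and "r + j < l * r"
    using assms(1,2) by linarith+
  then have to_hub: "comb l r (r + i) 0" and from_hub: "comb l r 0 (r + j)"
    unfolding comb_def using assms by auto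
  show "walk (comb l r) (q * r + i) (q * r + j) (q + 1)"
    using walk_append[OF down walk_cons[OF to_hub walk_cons[OF from_hub up]]] q by (simp add: mult_2)
next
  fix n assume "walk (comb l r) (q * r + i) (q * r + j) n"
  then have "hub_potential r i (q * r + j) \<le> hub_potential r i (q * r + i) + int n"
    by (rule walk_potential_bound) (rule hub_potential_comb)
  then show "q + 1 \<le> n"
    using assms by (simp add: hub_potential_def Let_def)
qed

lemma gdist_comb_same_level:
  assumes "u < l * r" "v < l * r" "u \<noteq> v" "u div r = v div r"
  shows "gdist (comb l r) u v = enat (u div r + 1)"
proof -
  define q i j where "q = u div r" and "i = u mod r" and "j = v mod r"
  have u: "u = q * r + i"
    unfolding q_def i_def by simp
  have v: "v = q * r + j"
    unfolding q_def j_def assms(4) by simp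
  have "0 < r" using assms(1) by (cases r) auto
  then have "i < r" "j < r"
    unfolding i_def j_def by simp_all
  moreover have "i \<noteq> j"
    using u v assms(3) by auto
  moreover have "q < l"
    unfolding q_def using assms(1) by (rule less_mult_imp_div_less)
  ultimately show ?thesis
    unfolding q_def[symmetric] u v
    by (cases "even q") (simp_all add: gdist_comb_even_level gdist_comb_odd_level)
qed

lemma level_set:
  fixes k l r :: nat
  assumes "k < l"
  shows "{v \<in> {0..<l * r}. v div r = k} = {k * r..<k * r + r}"
proof (intro set_eqI iffI)
  fix v assume "v \<in> {v \<in> {0..<l * r}. v div r = k}"
  then have "v div r = k" and "0 < r"
    by (auto intro: gr0I)
  then show "v \<in> {k * r..<k * r + r}"
    by (metis atLeastLessThan_iff div_mult_mod_eq le_add1 mod_less_divisor add_less_cancel_left)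
next
  fix v assume v: "v \<in> {k * r..<k * r + r}"
  have "k * r + r \<le> l * r"
    using assms by (metis add.commute mult_Suc mult_le_mono1 Suc_leI)
  with v show "v \<in> {v \<in> {0..<l * r}. v div r = k}"
    by (auto intro!: div_nat_eqI simp: mult.commute)
qed

lemma card_level: "(k :: nat) < l \<Longrightarrow> card {v \<in> {0..<l * r}. v div r = k} = r"
  by (subst level_set) simp_all

lemma level_image:
  fixes l r :: nat
  assumes "0 < r"
  shows "(\<lambda>v. v div r) ` {0..<l * r} = {..<l}"
proof
  show "(\<lambda>v. v div r) ` {0..<l * r} \<subseteq> {..<l}"
    by (auto intro: less_mult_imp_div_less)
  show "{..<l} \<subseteq> (\<lambda>v. v div r) ` {0..<l * r}"
  proof
    fix k assume "k \<in> {..<l}"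
    then have "k * r \<in> {v \<in> {0..<l * r}. v div r = k}"
      using assms by (simp add: level_set)
    then show "k \<in> (\<lambda>v. v div r) ` {0..<l * r}"
      by (intro image_eqI[where x = "k * r"]) auto
  qed
qed

lemma regular_distance_labeling_comb:
  assumes "0 < r"
  shows "regular_distance_labeling {0..<l * r} (comb l r) l r (\<lambda>v. v div r + 1)"
proof -
  let ?V = "{0..<l * r}" and ?f = "\<lambda>v. v div r + 1"
  have "?f ` ?V = Suc ` (\<lambda>v. v div r) ` ?V"
    by (simp add: image_image)
  then have labels: "?f ` ?V = {1..l}"
    by (simp add: level_image[OF assms] image_Suc_lessThan)
  have fibres: "card {v \<in> ?V. ?f v = k} = r" if "k \<in> {1..l}" for k
  proof -
    have "{v \<in> ?V. ?f v = k} = {v \<in> ?V. v div r = k - 1}" and "k - 1 < l"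
      using that by auto
    then show ?thesis
      by (simp only: card_level)
  qed
  have "gdist (comb l r) u v = enat (?f u)" if "u \<in> ?V" "v \<in> ?V" "u \<noteq> v" "?f u = ?f v" for u v
    using that by (simp add: gdist_comb_same_level)
  with labels fibres show ?thesis
    unfolding regular_distance_labeling_def distance_labeling_def by blast
qed

theorem mainTheorem5:
  fixes l r :: nat
  assumes "l > 0" and "r > 0"
  shows "\<exists>(V :: nat set) E f. simple_graph V E \<and> card V = l * r
           \<and> regular_distance_labeling V E l r f"
proof (intro exI conjI)
  show "simple_graph {0..<l * r} (comb l r)"
    by (rule simple_graph_comb)
  show "card {0..<l * r} = l * r"
    by simp
  show "regular_distance_labeling {0..<l * r} (comb l r) l r (\<lambda>v. v div r + 1)"
    using assms(2) by (rule regular_distance_labeling_comb)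
qed

end
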